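(* Let $\mathbb{X}$ be a Cartesian left additive category. If $f_\bullet:A\to B$ and $g_\bullet:B\to C$ are $\mathsf{D}$-sequences, then $f_\bullet\ast g_\bullet$ is a $\mathsf{D}$-sequence.
   Context: Composition in diagrammatic order. A Cartesian left additive category: finite products, hom-sets commutative monoids with $f(g+h)=fg+fh$, $f0=0$, projections additive. $\mathsf{P}(X)=X\times X$, $\mathsf{P}(f)=f\times f$. A pre-$\mathsf{D}$-sequence $f_\bullet:A\to B$ is $(f_n)_{n\ge0}$ with $f_n:\mathsf{P}^n(A)\to B$; $(h\cdot f_\bullet)_n=\mathsf{P}^n(h)f_n$; $\mathsf{T}(f_\bullet)_n=\langle\mathsf{P}^n(\pi_0)f_n,f_{n+1}\rangle$; $\mathsf{D}[f_\bullet]_n=f_{n+1}$; sums and $0_\bullet$ pointwise; composition $(f_\bullet\ast g_\bullet)_n=\mathsf{T}^n(f_\bullet)_0g_n$. A $\mathsf{D}$-sequence is a pre-$\mathsf{D}$-sequence such that for all $n$, with $X=\mathsf{P}^n(A)$: $\langle1,0\rangle\cdot\mathsf{D}^{n+1}[f_\bullet]=0_\bullet$ ($\langle1,0\rangle:X\to X\times X$); $(1\times(\pi_0+\pi_1))\cdot\mathsf{D}^{n+1}[f_\bullet]=(1\times\pi_0)\cdot\mathsf{D}^{n+1}[f_\bullet]+(1\times\pi_1)\cdot\mathsf{D}^{n+1}[f_\bullet]$ (maps $X\times(X\times X)\to X\times X$); $\ell\cdot\mathsf{D}^{n+2}[f_\bullet]=\mathsf{D}^{n+1}[f_\bullet]$,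 $\ell=\langle1,0\rangle\times\langle0,1\rangle:X\times X\to(X\times X)\times(X\times X)$; $c\cdot\mathsf{D}^{n+2}[f_\bullet]=\mathsf{D}^{n+2}[f_\bullet]$, $c=\langle\langle\pi_0\pi_0,\pi_1\pi_0\rangle,\langle\pi_0\pi_1,\pi_1\pi_1\rangle\rangle$. *)

theory Defs
  imports Main
begin

text \<open>A category with chosen finite products and left additive structure.
  Composition is written in diagrammatic order: cmp C f g means "first f, then g".\<close>

record ('o, 'm) cla_struct =
  Ob   :: "'o set"
  Hom  :: "'o \<Rightarrow> 'o \<Rightarrow> 'm set"
  cmp  :: "'m \<Rightarrow> 'm \<Rightarrow> 'm"
  ide  :: "'o \<Rightarrow> 'm"
  trm  :: "'o"
  bang :: "'o \<Rightarrow> 'm"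
  prd  :: "'o \<Rightarrow> 'o \<Rightarrow> 'o"
  pr0  :: "'o \<Rightarrow> 'o \<Rightarrow> 'm"
  pr1  :: "'o \<Rightarrow> 'o \<Rightarrow> 'm"
  pair :: "'m \<Rightarrow> 'm \<Rightarrow> 'm"
  pls  :: "'m \<Rightarrow> 'm \<Rightarrow> 'm"
  zro  :: "'o \<Rightarrow> 'o \<Rightarrow> 'm"

locale cartesian_left_additive =
  fixes C :: "('o, 'm) cla_struct"
  assumes hom_ob: "f \<in> Hom C A B \<Longrightarrow> A \<in> Ob C \<and> B \<in> Ob C"
    and hom_disj: "f \<in> Hom C A B \<Longrightarrow> f \<in> Hom C A' B' \<Longrightarrow> A = A' \<and> B = B'"
    and cmp_hom: "f \<in> Hom C A B \<Longrightarrow> g \<in> Hom C B D \<Longrightarrow> cmp C f g \<in> Hom C A D"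
    and cmp_assoc: "f \<in> Hom C A B \<Longrightarrow> g \<in> Hom C B D \<Longrightarrow> h \<in> Hom C D E \<Longrightarrow>
        cmp C (cmp C f g) h = cmp C f (cmp C g h)"
    and ide_hom: "A \<in> Ob C \<Longrightarrow> ide C A \<in> Hom C A A"
    and ide_left: "f \<in> Hom C A B \<Longrightarrow> cmp C (ide C A) f = f"
    and ide_right: "f \<in> Hom C A B \<Longrightarrow> cmp C f (ide C B) = f"
    and trm_ob: "trm C \<in> Ob C"
    and bang_hom: "A \<in> Ob C \<Longrightarrow> bang C A \<in> Hom C A (trm C)"
    and bang_uniq: "f \<in> Hom C A (trm C) \<Longrightarrow> f = bang C A"
    and prd_ob: "A \<in> Ob C \<Longrightarrow> B \<in> Ob C \<Longrightarrow> prd C A B \<in> Ob C"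
    and pr0_hom: "A \<in> Ob C \<Longrightarrow> B \<in> Ob C \<Longrightarrow> pr0 C A B \<in> Hom C (prd C A B) A"
    and pr1_hom: "A \<in> Ob C \<Longrightarrow> B \<in> Ob C \<Longrightarrow> pr1 C A B \<in> Hom C (prd C A B) B"
    and pair_hom: "f \<in> Hom C X A \<Longrightarrow> g \<in> Hom C X B \<Longrightarrow> pair C f g \<in> Hom C X (prd C A B)"
    and pair_pr0: "f \<in> Hom C X A \<Longrightarrow> g \<in> Hom C X B \<Longrightarrow> cmp C (pair C f g) (pr0 C A B) = f"
    and pair_pr1: "f \<in> Hom C X A \<Longrightarrow> g \<in> Hom C X B \<Longrightarrow> cmp C (pair C f g) (pr1 C A B) = g"
    and pair_uniq: "h \<in> Hom C X (prd C A B) \<Longrightarrow> A \<in> Ob C \<Longrightarrow> B \<in> Ob C \<Longrightarrow>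
        pair C (cmp C h (pr0 C A B)) (cmp C h (pr1 C A B)) = h"
    and pls_hom: "f \<in> Hom C A B \<Longrightarrow> g \<in> Hom C A B \<Longrightarrow> pls C f g \<in> Hom C A B"
    and zro_hom: "A \<in> Ob C \<Longrightarrow> B \<in> Ob C \<Longrightarrow> zro C A B \<in> Hom C A B"
    and pls_assoc: "f \<in> Hom C A B \<Longrightarrow> g \<in> Hom C A B \<Longrightarrow> h \<in> Hom C A B \<Longrightarrow>
        pls C (pls C f g) h = pls C f (pls C g h)"
    and pls_comm: "f \<in> Hom C A B \<Longrightarrow> g \<in> Hom C A B \<Longrightarrow> pls C f g = pls C g f"
    and pls_zro: "f \<in> Hom C A B \<Longrightarrow> pls C f (zro C A B) = f"
    and cmp_pls: "f \<in> Hom C A B \<Longrightarrow> g \<in> Hom C B D \<Longrightarrow> h \<in> Hom C B D \<Longrightarrow>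
        cmp C f (pls C g h) = pls C (cmp C f g) (cmp C f h)"
    and cmp_zro: "f \<in> Hom C A B \<Longrightarrow> D \<in> Ob C \<Longrightarrow> cmp C f (zro C B D) = zro C A D"
    and pr0_pls: "f \<in> Hom C X (prd C A B) \<Longrightarrow> g \<in> Hom C X (prd C A B) \<Longrightarrow> A \<in> Ob C \<Longrightarrow> B \<in> Ob C \<Longrightarrow>
        cmp C (pls C f g) (pr0 C A B) = pls C (cmp C f (pr0 C A B)) (cmp C g (pr0 C A B))"
    and pr1_pls: "f \<in> Hom C X (prd C A B) \<Longrightarrow> g \<in> Hom C X (prd C A B) \<Longrightarrow> A \<in> Ob C \<Longrightarrow> B \<in> Ob C \<Longrightarrow>
        cmp C (pls C f g) (pr1 C A B) = pls C (cmp C f (pr1 C A B)) (cmp C g (pr1 C A B))"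
    and pr0_zro: "X \<in> Ob C \<Longrightarrow> A \<in> Ob C \<Longrightarrow> B \<in> Ob C \<Longrightarrow>
        cmp C (zro C X (prd C A B)) (pr0 C A B) = zro C X A"
    and pr1_zro: "X \<in> Ob C \<Longrightarrow> A \<in> Ob C \<Longrightarrow> B \<in> Ob C \<Longrightarrow>
        cmp C (zro C X (prd C A B)) (pr1 C A B) = zro C X B"

text \<open>The functor P: P(X) = X \<times> X, P(f) = f \<times> f (f with source A).\<close>

definition Pob :: "('o, 'm, 'z) cla_struct_scheme \<Rightarrow> 'o \<Rightarrow> 'o" where
  "Pob C A = prd C A A"

definition Pmap :: "('o, 'm, 'z) cla_struct_scheme \<Rightarrow> 'o \<Rightarrow> 'm \<Rightarrow> 'm" where
  "Pmap C A f = pair C (cmp C (pr0 C A A) f) (cmp C (pr1 C A A) f)"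

definition Pnob :: "('o, 'm, 'z) cla_struct_scheme \<Rightarrow> nat \<Rightarrow> 'o \<Rightarrow> 'o" where
  "Pnob C n A = (Pob C ^^ n) A"

fun Pnmap :: "('o, 'm, 'z) cla_struct_scheme \<Rightarrow> nat \<Rightarrow> 'o \<Rightarrow> 'm \<Rightarrow> 'm" where
  "Pnmap C 0 A f = f"
| "Pnmap C (Suc n) A f = Pmap C (Pnob C n A) (Pnmap C n A f)"

definition pre_D_seq :: "('o, 'm, 'z) cla_struct_scheme \<Rightarrow> 'o \<Rightarrow> 'o \<Rightarrow> (nat \<Rightarrow> 'm) \<Rightarrow> bool" where
  "pre_D_seq C A B f \<longleftrightarrow> (\<forall>n. f n \<in> Hom C (Pnob C n A) B)"

definition act :: "('o, 'm, 'z) cla_struct_scheme \<Rightarrow> 'o \<Rightarrow> 'm \<Rightarrow> (nat \<Rightarrow> 'm) \<Rightarrow> (nat \<Rightarrow> 'm)" where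
  "act C A h f = (\<lambda>n. cmp C (Pnmap C n A h) (f n))"

definition Tseq :: "('o, 'm, 'z) cla_struct_scheme \<Rightarrow> 'o \<Rightarrow> (nat \<Rightarrow> 'm) \<Rightarrow> (nat \<Rightarrow> 'm)" where
  "Tseq C A f = (\<lambda>n. pair C (cmp C (Pnmap C n (Pob C A) (pr0 C A A)) (f n)) (f (Suc n)))"

fun Titer :: "('o, 'm, 'z) cla_struct_scheme \<Rightarrow> nat \<Rightarrow> 'o \<Rightarrow> (nat \<Rightarrow> 'm) \<Rightarrow> (nat \<Rightarrow> 'm)" where
  "Titer C 0 A f = f"
| "Titer C (Suc k) A f = Tseq C (Pnob C k A) (Titer C k A f)"

definition Dk :: "nat \<Rightarrow> (nat \<Rightarrow> 'm) \<Rightarrow> (nat \<Rightarrow> 'm)" where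
  "Dk k f = (\<lambda>n. f (k + n))"

definition seq_add :: "('o, 'm, 'z) cla_struct_scheme \<Rightarrow> (nat \<Rightarrow> 'm) \<Rightarrow> (nat \<Rightarrow> 'm) \<Rightarrow> (nat \<Rightarrow> 'm)" where
  "seq_add C f g = (\<lambda>n. pls C (f n) (g n))"

definition seq_zero :: "('o, 'm, 'z) cla_struct_scheme \<Rightarrow> 'o \<Rightarrow> 'o \<Rightarrow> (nat \<Rightarrow> 'm)" where
  "seq_zero C A B = (\<lambda>n. zro C (Pnob C n A) B)"

text \<open>(f * g)_n = T^n(f)_0 g_n, for f with source A.\<close>
definition seq_comp :: "('o, 'm, 'z) cla_struct_scheme \<Rightarrow> 'o \<Rightarrow> (nat \<Rightarrow> 'm) \<Rightarrow> (nat \<Rightarrow> 'm) \<Rightarrow> (nat \<Rightarrow> 'm)" where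
  "seq_comp C A f g = (\<lambda>n. cmp C (Titer C n A f 0) (g n))"

definition id_times :: "('o, 'm, 'z) cla_struct_scheme \<Rightarrow> 'o \<Rightarrow> 'o \<Rightarrow> 'm \<Rightarrow> 'm" where
  "id_times C X Y g = pair C (cmp C (pr0 C X Y) (ide C X)) (cmp C (pr1 C X Y) g)"

definition D_seq :: "('o, 'm, 'z) cla_struct_scheme \<Rightarrow> 'o \<Rightarrow> 'o \<Rightarrow> (nat \<Rightarrow> 'm) \<Rightarrow> bool" where
  "D_seq C A B f \<longleftrightarrow> pre_D_seq C A B f \<and>
    (\<forall>n. let X = Pnob C n A; Y = Pob C X;
             i0 = pair C (ide C X) (zro C X X);
             i1 = pair C (zro C X X) (ide C X);
             p0 = pr0 C X X; p1 = pr1 C X X;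
             l = pair C (cmp C p0 i0) (cmp C p1 i1);
             c = pair C (pair C (cmp C (pr0 C Y Y) p0) (cmp C (pr1 C Y Y) p0))
                        (pair C (cmp C (pr0 C Y Y) p1) (cmp C (pr1 C Y Y) p1))
         in act C X i0 (Dk (n + 1) f) = seq_zero C X B
          \<and> act C (prd C X Y) (id_times C X Y (pls C p0 p1)) (Dk (n + 1) f)
              = seq_add C (act C (prd C X Y) (id_times C X Y p0) (Dk (n + 1) f))
                          (act C (prd C X Y) (id_times C X Y p1) (Dk (n + 1) f))
          \<and> act C Y l (Dk (n + 2) f) = Dk (n + 1) f
          \<and> act C (Pob C Y) c (Dk (n + 2) f) = Dk (n + 2) f)"

end

(*
  Shifting turns composition into composition with T: D^n (f * g) = T^n f * D^n g.
  Hence the axioms of f * g at level n are the level-0 axioms of T^n f * D^n g, and it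
  suffices that (a) T maps D-sequences to D-sequences and (b) composition preserves
  the level-0 axioms.

  For (b), every structural map h of an axiom (<1,0>, 1 x phi, l, c) slides through
  T^k f: acting by h on T^k f equals post-composing some H with the corresponding map h'
  on the codomain, which is where the axioms of f enter. Then h acting on T^k f * D^k g
  is H * (h' acting on D^k g), and the axioms of g apply.

  For (a), D^n (T f) = <P^n(pi_0) . D^n f, D^(n+1) f>. Such a pair satisfies the axioms
  whenever D^n f and D^(n+1) f do: P^n(pi_0) is additive, which is what lets
  the structural maps slide past P(P^n(pi_0)) and P(P(P^n(pi_0))).
*)

theory Submission
  imports Defs
begin

context cartesian_left_additive
begin

section \<open>Typed arrows\<close>

text \<open>Hom-sets are disjoint, so every arrow has a unique domain and codomain; stating the
  category laws with these lets the simplifier discharge all typing conditions.\<close>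

definition arr :: "'m \<Rightarrow> bool" where
  "arr f \<longleftrightarrow> (\<exists>A B. f \<in> Hom C A B)"

definition dm :: "'m \<Rightarrow> 'o" where
  "dm f = (THE A. \<exists>B. f \<in> Hom C A B)"

definition cd :: "'m \<Rightarrow> 'o" where
  "cd f = (THE B. \<exists>A. f \<in> Hom C A B)"

lemma in_Hom_iff: "f \<in> Hom C A B \<longleftrightarrow> arr f \<and> dm f = A \<and> cd f = B"
proof -
  have "dm f = A \<and> cd f = B" if "f \<in> Hom C A B" for A B
    unfolding dm_def cd_def using that hom_disj by blast
  then show ?thesis
    unfolding arr_def by blast
qed

lemma arr_in_Hom: "arr f \<Longrightarrow> f \<in> Hom C (dm f) (cd f)"
  using in_Hom_iff by blast

lemma ob_dm [simp]: "arr f \<Longrightarrow> dm f \<in> Ob C"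
  and ob_cd [simp]: "arr f \<Longrightarrow> cd f \<in> Ob C"
  using arr_in_Hom hom_ob by blast+

declare prd_ob [simp] pr0_zro [simp] pr1_zro [simp]

lemma arr_cmp [simp]: "arr f \<Longrightarrow> arr g \<Longrightarrow> cd f = dm g \<Longrightarrow> arr (cmp C f g)"
  and dm_cmp [simp]: "arr f \<Longrightarrow> arr g \<Longrightarrow> cd f = dm g \<Longrightarrow> dm (cmp C f g) = dm f"
  and cd_cmp [simp]: "arr f \<Longrightarrow> arr g \<Longrightarrow> cd f = dm g \<Longrightarrow> cd (cmp C f g) = cd g"
  using cmp_hom[of f "dm f" "cd f" g "cd g"] arr_in_Hom in_Hom_iff by metis+

lemma arr_ide [simp]: "A \<in> Ob C \<Longrightarrow> arr (ide C A)"
  and dm_ide [simp]: "A \<in> Ob C \<Longrightarrow> dm (ide C A) = A"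
  and cd_ide [simp]: "A \<in> Ob C \<Longrightarrow> cd (ide C A) = A"
  using ide_hom in_Hom_iff by blast+

lemma arr_pr0 [simp]: "A \<in> Ob C \<Longrightarrow> B \<in> Ob C \<Longrightarrow> arr (pr0 C A B)"
  and dm_pr0 [simp]: "A \<in> Ob C \<Longrightarrow> B \<in> Ob C \<Longrightarrow> dm (pr0 C A B) = prd C A B"
  and cd_pr0 [simp]: "A \<in> Ob C \<Longrightarrow> B \<in> Ob C \<Longrightarrow> cd (pr0 C A B) = A"
  using pr0_hom in_Hom_iff by blast+

lemma arr_pr1 [simp]: "A \<in> Ob C \<Longrightarrow> B \<in> Ob C \<Longrightarrow> arr (pr1 C A B)"
  and dm_pr1 [simp]: "A \<in> Ob C \<Longrightarrow> B \<in> Ob C \<Longrightarrow> dm (pr1 C A B) = prd C A B"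
  and cd_pr1 [simp]: "A \<in> Ob C \<Longrightarrow> B \<in> Ob C \<Longrightarrow> cd (pr1 C A B) = B"
  using pr1_hom in_Hom_iff by blast+

lemma arr_pair [simp]: "arr f \<Longrightarrow> arr g \<Longrightarrow> dm f = dm g \<Longrightarrow> arr (pair C f g)"
  and dm_pair [simp]: "arr f \<Longrightarrow> arr g \<Longrightarrow> dm f = dm g \<Longrightarrow> dm (pair C f g) = dm f"
  and cd_pair [simp]: "arr f \<Longrightarrow> arr g \<Longrightarrow> dm f = dm g \<Longrightarrow> cd (pair C f g) = prd C (cd f) (cd g)"
  using pair_hom[of f "dm f" "cd f" g "cd g"] arr_in_Hom in_Hom_iff by metis+

lemma arr_pls [simp]: "arr f \<Longrightarrow> arr g \<Longrightarrow> dm f = dm g \<Longrightarrow> cd f = cd g \<Longrightarrow> arr (pls C f g)"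
  and dm_pls [simp]: "arr f \<Longrightarrow> arr g \<Longrightarrow> dm f = dm g \<Longrightarrow> cd f = cd g \<Longrightarrow> dm (pls C f g) = dm f"
  and cd_pls [simp]: "arr f \<Longrightarrow> arr g \<Longrightarrow> dm f = dm g \<Longrightarrow> cd f = cd g \<Longrightarrow> cd (pls C f g) = cd f"
  using pls_hom[of f "dm f" "cd f" g] arr_in_Hom in_Hom_iff by metis+

lemma arr_zro [simp]: "A \<in> Ob C \<Longrightarrow> B \<in> Ob C \<Longrightarrow> arr (zro C A B)"
  and dm_zro [simp]: "A \<in> Ob C \<Longrightarrow> B \<in> Ob C \<Longrightarrow> dm (zro C A B) = A"
  and cd_zro [simp]: "A \<in> Ob C \<Longrightarrow> B \<in> Ob C \<Longrightarrow> cd (zro C A B) = B"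
  using zro_hom in_Hom_iff by blast+

lemma cmp_assoc_arr [simp]:
  "arr f \<Longrightarrow> arr g \<Longrightarrow> arr h \<Longrightarrow> cd f = dm g \<Longrightarrow> cd g = dm h \<Longrightarrow>
   cmp C (cmp C f g) h = cmp C f (cmp C g h)"
  using cmp_assoc arr_in_Hom by metis

lemma ide_left_arr [simp]: "arr f \<Longrightarrow> A = dm f \<Longrightarrow> cmp C (ide C A) f = f"
  and ide_right_arr [simp]: "arr f \<Longrightarrow> B = cd f \<Longrightarrow> cmp C f (ide C B) = f"
  using ide_left ide_right arr_in_Hom by metis+

lemma pair_pr0_arr [simp]:
  "arr f \<Longrightarrow> arr g \<Longrightarrow> dm f = dm g \<Longrightarrow> A = cd f \<Longrightarrow> B = cd g \<Longrightarrow>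
   cmp C (pair C f g) (pr0 C A B) = f"
  and pair_pr1_arr [simp]:
  "arr f \<Longrightarrow> arr g \<Longrightarrow> dm f = dm g \<Longrightarrow> A = cd f \<Longrightarrow> B = cd g \<Longrightarrow>
   cmp C (pair C f g) (pr1 C A B) = g"
  using pair_pr0 pair_pr1 arr_in_Hom by metis+

lemma pair_pr0_cmp [simp]:
  "arr f \<Longrightarrow> arr g \<Longrightarrow> dm f = dm g \<Longrightarrow> A = cd f \<Longrightarrow> B = cd g \<Longrightarrow> arr h \<Longrightarrow> dm h = A \<Longrightarrow>
   cmp C (pair C f g) (cmp C (pr0 C A B) h) = cmp C f h"
  by (subst cmp_assoc_arr[symmetric]) auto

lemma pair_pr1_cmp [simp]:
  "arr f \<Longrightarrow> arr g \<Longrightarrow> dm f = dm g \<Longrightarrow> A = cd f \<Longrightarrow> B = cd g \<Longrightarrow> arr h \<Longrightarrow> dm h = B \<Longrightarrow>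
   cmp C (pair C f g) (cmp C (pr1 C A B) h) = cmp C g h"
  by (subst cmp_assoc_arr[symmetric]) auto

lemma pair_uniq_arr [simp]:
  "arr h \<Longrightarrow> cd h = prd C A B \<Longrightarrow> A \<in> Ob C \<Longrightarrow> B \<in> Ob C \<Longrightarrow>
   pair C (cmp C h (pr0 C A B)) (cmp C h (pr1 C A B)) = h"
  using pair_uniq arr_in_Hom by metis

lemma cmp_pair [simp]:
  assumes "arr h" "arr a" "arr b" "cd h = dm a" "dm a = dm b"
  shows "cmp C h (pair C a b) = pair C (cmp C h a) (cmp C h b)"
  using pair_uniq_arr[of "cmp C h (pair C a b)" "cd a" "cd b"] assms
  by (simp del: pair_uniq_arr)

lemma cmp_pls_arr [simp]:
  "arr f \<Longrightarrow> arr g \<Longrightarrow> arr h \<Longrightarrow> cd f = dm g \<Longrightarrow> dm g = dm h \<Longrightarrow> cd g = cd h \<Longrightarrow>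
   cmp C f (pls C g h) = pls C (cmp C f g) (cmp C f h)"
  using cmp_pls arr_in_Hom by metis

lemma cmp_zro_arr [simp]: "arr f \<Longrightarrow> D \<in> Ob C \<Longrightarrow> B = cd f \<Longrightarrow> cmp C f (zro C B D) = zro C (dm f) D"
  using cmp_zro arr_in_Hom by metis

lemma pr0_pls_arr [simp]:
  "arr f \<Longrightarrow> arr g \<Longrightarrow> dm f = dm g \<Longrightarrow> cd f = prd C A B \<Longrightarrow> cd g = prd C A B \<Longrightarrow>
   A \<in> Ob C \<Longrightarrow> B \<in> Ob C \<Longrightarrow>
   cmp C (pls C f g) (pr0 C A B) = pls C (cmp C f (pr0 C A B)) (cmp C g (pr0 C A B))"
  and pr1_pls_arr [simp]:
  "arr f \<Longrightarrow> arr g \<Longrightarrow> dm f = dm g \<Longrightarrow> cd f = prd C A B \<Longrightarrow> cd g = prd C A B \<Longrightarrow>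
   A \<in> Ob C \<Longrightarrow> B \<in> Ob C \<Longrightarrow>
   cmp C (pls C f g) (pr1 C A B) = pls C (cmp C f (pr1 C A B)) (cmp C g (pr1 C A B))"
  using pr0_pls pr1_pls arr_in_Hom by metis+


lemma pair_zro [simp]:
  "X \<in> Ob C \<Longrightarrow> A \<in> Ob C \<Longrightarrow> B \<in> Ob C \<Longrightarrow> pair C (zro C X A) (zro C X B) = zro C X (prd C A B)"
  using pair_uniq_arr[of "zro C X (prd C A B)" A B] by simp

lemma pls_pair [simp]:
  assumes "arr a" "arr b" "arr c" "arr d" "dm a = dm b" "dm c = dm a" "dm d = dm a"
    and "cd c = cd a" "cd d = cd b"
  shows "pls C (pair C a b) (pair C c d) = pair C (pls C a c) (pls C b d)"
  using pair_uniq_arr[of "pls C (pair C a b) (pair C c d)" "cd a" "cd b"] assms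
  by (simp del: pair_uniq_arr)

lemma pls_zro_arr [simp]: "arr f \<Longrightarrow> A = dm f \<Longrightarrow> B = cd f \<Longrightarrow> pls C f (zro C A B) = f"
  and zro_pls_arr [simp]: "arr f \<Longrightarrow> A = dm f \<Longrightarrow> B = cd f \<Longrightarrow> pls C (zro C A B) f = f"
  using pls_zro pls_comm zro_hom arr_in_Hom by (metis ob_cd ob_dm)+

section \<open>The functor P\<close>

declare Pob_def [simp]

lemma pair_pr0_pr1 [simp]: "A \<in> Ob C \<Longrightarrow> B \<in> Ob C \<Longrightarrow> pair C (pr0 C A B) (pr1 C A B) = ide C (prd C A B)"
  using pair_uniq_arr[of "ide C (prd C A B)" A B] by simp

lemma Pnob_0 [simp]: "Pnob C 0 A = A"
  and Pnob_Suc [simp]: "Pnob C (Suc n) A = prd C (Pnob C n A) (Pnob C n A)"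
  by (simp_all add: Pnob_def)

lemma Pnob_prd [simp]: "Pnob C n (prd C A A) = prd C (Pnob C n A) (Pnob C n A)"
  by (induction n) auto

lemma Pnob_Pnob [simp]: "Pnob C m (Pnob C k A) = Pnob C (k + m) A"
  by (induction m) auto

lemma ob_Pnob [simp]: "A \<in> Ob C \<Longrightarrow> Pnob C n A \<in> Ob C"
  by (induction n) auto

lemma arr_Pmap [simp]: "arr f \<Longrightarrow> A = dm f \<Longrightarrow> arr (Pmap C A f)"
  and dm_Pmap [simp]: "arr f \<Longrightarrow> A = dm f \<Longrightarrow> dm (Pmap C A f) = prd C A A"
  and cd_Pmap [simp]: "arr f \<Longrightarrow> A = dm f \<Longrightarrow> cd (Pmap C A f) = prd C (cd f) (cd f)"
  by (auto simp: Pmap_def)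

lemma Pmap_cmp [simp]:
  "arr f \<Longrightarrow> arr g \<Longrightarrow> A = dm f \<Longrightarrow> B = cd f \<Longrightarrow> dm g = cd f \<Longrightarrow>
   cmp C (Pmap C A f) (Pmap C B g) = Pmap C A (cmp C f g)"
  by (simp add: Pmap_def)

lemma Pmap_pr0 [simp]: "arr f \<Longrightarrow> A = dm f \<Longrightarrow> B = cd f \<Longrightarrow> cmp C (Pmap C A f) (pr0 C B B) = cmp C (pr0 C A A) f"
  and Pmap_pr1 [simp]: "arr f \<Longrightarrow> A = dm f \<Longrightarrow> B = cd f \<Longrightarrow> cmp C (Pmap C A f) (pr1 C B B) = cmp C (pr1 C A A) f"
  by (simp_all add: Pmap_def)

lemma arr_Pnmap [simp]: "arr h \<Longrightarrow> A = dm h \<Longrightarrow> arr (Pnmap C n A h)"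
  and dm_Pnmap [simp]: "arr h \<Longrightarrow> A = dm h \<Longrightarrow> dm (Pnmap C n A h) = Pnob C n A"
  and cd_Pnmap [simp]: "arr h \<Longrightarrow> A = dm h \<Longrightarrow> cd (Pnmap C n A h) = Pnob C n (cd h)"
  by (induction n) auto

lemma Pnmap_Suc_inner: "Pnmap C (Suc n) A h = Pnmap C n (prd C A A) (Pmap C A h)"
  by (induction n) simp_all

lemma Pnmap_add: "Pnmap C (k + m) A h = Pnmap C m (Pnob C k A) (Pnmap C k A h)"
  by (induction m) auto

lemma Pnmap_cmp [simp]:
  "arr f \<Longrightarrow> arr g \<Longrightarrow> A = dm f \<Longrightarrow> B = cd f \<Longrightarrow> dm g = cd f \<Longrightarrow>
   cmp C (Pnmap C n A f) (Pnmap C n B g) = Pnmap C n A (cmp C f g)"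
  by (induction n) auto

lemma Pnmap_cmp_cmp [simp]:
  assumes "arr f" "arr g" "A = dm f" "B = cd f" "dm g = cd f" "arr h" "dm h = Pnob C n (cd g)"
  shows "cmp C (Pnmap C n A f) (cmp C (Pnmap C n B g) h) = cmp C (Pnmap C n A (cmp C f g)) h"
  using assms by (subst cmp_assoc_arr[symmetric]) (simp_all del: cmp_assoc_arr)

lemma Pnmap_ide [simp]: "A \<in> Ob C \<Longrightarrow> Pnmap C n A (ide C A) = ide C (Pnob C n A)"
  by (induction n) (auto simp: Pmap_def)

section \<open>Operations on pre-D-sequences\<close>

definition seq_pair :: "(nat \<Rightarrow> 'm) \<Rightarrow> (nat \<Rightarrow> 'm) \<Rightarrow> nat \<Rightarrow> 'm" where
  "seq_pair F G = (\<lambda>n. pair C (F n) (G n))"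

definition seq_post :: "(nat \<Rightarrow> 'm) \<Rightarrow> 'm \<Rightarrow> nat \<Rightarrow> 'm" where
  "seq_post F k = (\<lambda>n. cmp C (F n) k)"

lemma pre_D_seq_arr [simp]: "pre_D_seq C X Y F \<Longrightarrow> arr (F n)"
  and pre_D_seq_dm [simp]: "pre_D_seq C X Y F \<Longrightarrow> dm (F n) = Pnob C n X"
  and pre_D_seq_cd [simp]: "pre_D_seq C X Y F \<Longrightarrow> cd (F n) = Y"
  unfolding pre_D_seq_def in_Hom_iff by blast+

lemma pre_D_seqI: "(\<And>n. arr (F n) \<and> dm (F n) = Pnob C n X \<and> cd (F n) = Y) \<Longrightarrow> pre_D_seq C X Y F"
  unfolding pre_D_seq_def in_Hom_iff by blast

lemma pre_D_seq_ob_src: "pre_D_seq C X Y F \<Longrightarrow> X \<in> Ob C"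
  and pre_D_seq_ob_tgt: "pre_D_seq C X Y F \<Longrightarrow> Y \<in> Ob C"
  by (metis Pnob_0 ob_dm ob_cd pre_D_seq_arr pre_D_seq_dm pre_D_seq_cd)+

lemma pre_D_seq_act: "pre_D_seq C X Y F \<Longrightarrow> arr h \<Longrightarrow> dm h = X' \<Longrightarrow> cd h = X \<Longrightarrow>
  pre_D_seq C X' Y (act C X' h F)"
  by (rule pre_D_seqI) (simp add: act_def)

lemma pre_D_seq_pair: "pre_D_seq C X Y F \<Longrightarrow> pre_D_seq C X Y' G \<Longrightarrow>
  pre_D_seq C X (prd C Y Y') (seq_pair F G)"
  by (rule pre_D_seqI) (simp add: seq_pair_def)

lemma pre_D_seq_Dk: "pre_D_seq C X Y F \<Longrightarrow> pre_D_seq C (Pnob C k X) Y (Dk k F)"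
  by (rule pre_D_seqI) (simp add: Dk_def)

lemma pre_D_seq_Tseq: "pre_D_seq C X Y F \<Longrightarrow> pre_D_seq C (prd C X X) (prd C Y Y) (Tseq C X F)"
  by (rule pre_D_seqI) (simp add: Tseq_def pre_D_seq_ob_src)

lemma pre_D_seq_Titer: "pre_D_seq C X Y F \<Longrightarrow> pre_D_seq C (Pnob C m X) (Pnob C m Y) (Titer C m X F)"
  by (induction m) (simp_all add: pre_D_seq_Tseq)

lemma pre_D_seq_seq_comp:
  assumes "pre_D_seq C X Y G" "pre_D_seq C Y E K"
  shows "pre_D_seq C X E (seq_comp C X G K)"
proof (rule pre_D_seqI)
  fix n
  have "pre_D_seq C (Pnob C n X) (Pnob C n Y) (Titer C n X G)"
    using assms(1) by (rule pre_D_seq_Titer)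
  then show "arr (seq_comp C X G K n) \<and> dm (seq_comp C X G K n) = Pnob C n X \<and> cd (seq_comp C X G K n) = E"
    using pre_D_seq_arr pre_D_seq_dm pre_D_seq_cd assms(2) by (simp add: seq_comp_def)
qed

lemma act_act:
  "pre_D_seq C X Y F \<Longrightarrow> arr h \<Longrightarrow> dm h = X' \<Longrightarrow> cd h = X \<Longrightarrow> arr h' \<Longrightarrow> cd h' = X' \<Longrightarrow> dm h' = X'' \<Longrightarrow>
   act C X'' h' (act C X' h F) = act C X'' (cmp C h' h) F"
  by (rule ext) (simp add: act_def)

lemma act_act_commute:
  assumes F: "pre_D_seq C X Y F"
    and p: "arr p" "dm p = X1" "cd p = X" and h': "arr h'" "dm h' = X2" "cd h' = X1"
    and h: "arr h" "dm h = X3" "cd h = X" and p': "arr p'" "dm p' = X2" "cd p' = X3"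
    and "cmp C h' p = cmp C p' h"
  shows "act C X2 h' (act C X1 p F) = act C X2 p' (act C X3 h F)"
  using assms by (simp add: act_act[OF F])

lemma act_ide: "pre_D_seq C X Y F \<Longrightarrow> act C X (ide C X) F = F"
  by (rule ext) (simp add: act_def pre_D_seq_ob_src)

lemma act_seq_zero: "arr h \<Longrightarrow> dm h = X' \<Longrightarrow> cd h = X \<Longrightarrow> Y \<in> Ob C \<Longrightarrow>
  act C X' h (seq_zero C X Y) = seq_zero C X' Y"
  by (rule ext) (simp add: act_def seq_zero_def)

lemma act_seq_add:
  "pre_D_seq C X Y F \<Longrightarrow> pre_D_seq C X Y G \<Longrightarrow> arr h \<Longrightarrow> dm h = X' \<Longrightarrow> cd h = X \<Longrightarrow>
   act C X' h (seq_add C F G) = seq_add C (act C X' h F) (act C X' h G)"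
  by (rule ext) (simp add: act_def seq_add_def)

lemma act_seq_pair:
  "pre_D_seq C X Y F \<Longrightarrow> pre_D_seq C X Y' G \<Longrightarrow> arr h \<Longrightarrow> dm h = X' \<Longrightarrow> cd h = X \<Longrightarrow>
   act C X' h (seq_pair F G) = seq_pair (act C X' h F) (act C X' h G)"
  by (rule ext) (simp add: act_def seq_pair_def)

lemma act_seq_post:
  "pre_D_seq C X Y F \<Longrightarrow> arr k \<Longrightarrow> dm k = Y \<Longrightarrow> arr h \<Longrightarrow> dm h = X' \<Longrightarrow> cd h = X \<Longrightarrow>
   act C X' h (seq_post F k) = seq_post (act C X' h F) k"
  by (rule ext) (simp add: act_def seq_post_def)

lemma seq_pair_zero: "X \<in> Ob C \<Longrightarrow> Y \<in> Ob C \<Longrightarrow> Y' \<in> Ob C \<Longrightarrow>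
  seq_pair (seq_zero C X Y) (seq_zero C X Y') = seq_zero C X (prd C Y Y')"
  by (rule ext) (simp add: seq_pair_def seq_zero_def)

lemma seq_pair_act_seq_add:
  "pre_D_seq C X Y A0 \<Longrightarrow> pre_D_seq C X Y A1 \<Longrightarrow> pre_D_seq C Z Y' B0 \<Longrightarrow> pre_D_seq C Z Y' B1 \<Longrightarrow>
   arr r \<Longrightarrow> dm r = Z \<Longrightarrow> cd r = X \<Longrightarrow>
   seq_pair (act C Z r (seq_add C A0 A1)) (seq_add C B0 B1)
   = seq_add C (seq_pair (act C Z r A0) B0) (seq_pair (act C Z r A1) B1)"
  by (rule ext) (simp add: seq_pair_def seq_add_def act_def)

lemma seq_post_pair_pr0: "pre_D_seq C X Y F \<Longrightarrow> pre_D_seq C X Y' G \<Longrightarrow> seq_post (seq_pair F G) (pr0 C Y Y') = F"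
  and seq_post_pair_pr1: "pre_D_seq C X Y F \<Longrightarrow> pre_D_seq C X Y' G \<Longrightarrow> seq_post (seq_pair F G) (pr1 C Y Y') = G"
  by (intro ext; simp add: seq_post_def seq_pair_def pre_D_seq_ob_tgt)+

lemma seq_post_pair_pls:
  "pre_D_seq C X Y F \<Longrightarrow> pre_D_seq C X Y G \<Longrightarrow>
   seq_post (seq_pair F G) (pls C (pr0 C Y Y) (pr1 C Y Y)) = seq_add C F G"
  by (rule ext) (simp add: seq_post_def seq_pair_def seq_add_def pre_D_seq_ob_tgt)

lemma seq_post_pair_id_times:
  "pre_D_seq C X Y F \<Longrightarrow> pre_D_seq C X Y' G \<Longrightarrow> arr \<psi> \<Longrightarrow> dm \<psi> = Y' \<Longrightarrow>
   seq_post (seq_pair F G) (id_times C Y Y' \<psi>) = seq_pair F (seq_post G \<psi>)"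
  by (rule ext) (simp add: seq_post_def seq_pair_def id_times_def pre_D_seq_ob_tgt)

lemma Dk_0 [simp]: "Dk 0 F = F"
  by (simp add: Dk_def)

lemma Dk_Dk: "Dk a (Dk b F) = Dk (b + a) F"
  by (simp add: Dk_def add.assoc)

lemma Dk_act: "Dk k (act C X h F) = act C (Pnob C k X) (Pnmap C k X h) (Dk k F)"
  by (rule ext) (simp add: act_def Dk_def Pnmap_add)

lemma Dk_seq_pair: "Dk k (seq_pair F G) = seq_pair (Dk k F) (Dk k G)"
  by (simp add: seq_pair_def Dk_def)

lemma Tseq_eq_seq_pair: "Tseq C X F = seq_pair (act C (prd C X X) (pr0 C X X) F) (Dk 1 F)"
  by (rule ext) (simp add: Tseq_def seq_pair_def act_def Dk_def)

lemma Dk_pair_act_Dk: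
  "Dk 1 (seq_pair (act C X' q F) (Dk 1 F)) = seq_pair (act C (prd C X' X') (Pmap C X' q) (Dk 1 F)) (Dk 2 F)"
  "Dk 2 (seq_pair (act C X' q F) (Dk 1 F)) =
     seq_pair (act C (prd C (prd C X' X') (prd C X' X')) (Pmap C (prd C X' X') (Pmap C X' q)) (Dk 2 F)) (Dk 3 F)"
  by (simp_all add: Dk_seq_pair Dk_act Dk_Dk numeral_2_eq_2 numeral_3_eq_3)

lemma Tseq_Tseq_eq:
  assumes G: "pre_D_seq C X Y G"
  shows "Tseq C (prd C X X) (Tseq C X G) =
    seq_pair (seq_pair (act C (prd C (prd C X X) (prd C X X)) (cmp C (pr0 C (prd C X X) (prd C X X)) (pr0 C X X)) G)
                       (act C (prd C (prd C X X) (prd C X X)) (pr0 C (prd C X X) (prd C X X)) (Dk 1 G)))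
             (seq_pair (act C (prd C (prd C X X) (prd C X X)) (Pmap C (prd C X X) (pr0 C X X)) (Dk 1 G))
                       (Dk 2 G))"
  using pre_D_seq_ob_src[OF G] pre_D_seq_ob_tgt[OF G]
  by (intro ext) (simp add: Tseq_def seq_pair_def act_def Dk_def Pnmap_Suc_inner numeral_2_eq_2
      pre_D_seq_arr[OF G] pre_D_seq_dm[OF G] pre_D_seq_cd[OF G] del: Pnmap.simps)

lemma Tseq_act:
  assumes "pre_D_seq C X Y F" "arr h" "dm h = X'" "cd h = X"
  shows "Tseq C X' (act C X' h F) = act C (prd C X' X') (Pmap C X' h) (Tseq C X F)"
  using assms pre_D_seq_ob_src[OF assms(1)] ob_dm[OF assms(2)]
  by (intro ext) (simp add: Tseq_def act_def Pnmap_Suc_inner del: Pnmap.simps)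

lemma Tseq_post:
  "pre_D_seq C X Y F \<Longrightarrow> arr k \<Longrightarrow> dm k = Y \<Longrightarrow> Tseq C X (seq_post F k) = seq_post (Tseq C X F) (Pmap C Y k)"
  by (rule ext) (simp add: Tseq_def seq_post_def Pmap_def pre_D_seq_ob_src pre_D_seq_ob_tgt)

lemma Titer_act:
  assumes "pre_D_seq C X Y F" "arr h" "dm h = X'" "cd h = X"
  shows "Titer C m X' (act C X' h F) = act C (Pnob C m X') (Pnmap C m X' h) (Titer C m X F)"
proof (induction m)
  case (Suc m)
  have "pre_D_seq C (Pnob C m X) (Pnob C m Y) (Titer C m X F)"
    using assms(1) by (rule pre_D_seq_Titer)
  with Suc assms show ?case
    by (simp add: Tseq_act del: Pob_def)
qed simp

lemma Titer_post:
  assumes "pre_D_seq C X Y F" "arr k" "dm k = Y"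
  shows "Titer C m X (seq_post F k) = seq_post (Titer C m X F) (Pnmap C m Y k)"
proof (induction m)
  case (Suc m)
  have "pre_D_seq C (Pnob C m X) (Pnob C m Y) (Titer C m X F)"
    using assms(1) by (rule pre_D_seq_Titer)
  with Suc assms show ?case
    by (simp add: Tseq_post del: Pob_def)
qed simp

lemma Titer_Titer: "Titer C m (Pnob C k X) (Titer C k X F) = Titer C (k + m) X F"
  by (induction m) auto

lemma Titer_1 [simp]: "Titer C 1 X G = Tseq C X G"
  and Titer_2 [simp]: "Titer C 2 X G = Tseq C (prd C X X) (Tseq C X G)"
  by (simp_all add: numeral_2_eq_2)

lemma Dk_seq_comp: "Dk k (seq_comp C X G K) = seq_comp C (Pnob C k X) (Titer C k X G) (Dk k K)"
  by (rule ext) (simp add: Dk_def seq_comp_def Titer_Titer)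

lemma seq_comp_act:
  assumes G: "pre_D_seq C X Y G" and K: "pre_D_seq C Y E K" and h: "arr h" "dm h = X'" "cd h = X"
  shows "seq_comp C X' (act C X' h G) K = act C X' h (seq_comp C X G K)"
proof
  fix m
  have "pre_D_seq C (Pnob C m X) (Pnob C m Y) (Titer C m X G)"
    using G by (rule pre_D_seq_Titer)
  then show "seq_comp C X' (act C X' h G) K m = act C X' h (seq_comp C X G K) m"
    unfolding seq_comp_def Titer_act[OF G h] using h K by (simp add: act_def)
qed

lemma seq_comp_post:
  assumes G: "pre_D_seq C X Y G" and K: "pre_D_seq C Y' E K" and k: "arr k" "dm k = Y" "cd k = Y'"
  shows "seq_comp C X (seq_post G k) K = seq_comp C X G (act C Y k K)"
proof
  fix m
  have "pre_D_seq C (Pnob C m X) (Pnob C m Y) (Titer C m X G)"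
    using G by (rule pre_D_seq_Titer)
  then show "seq_comp C X (seq_post G k) K m = seq_comp C X G (act C Y k K) m"
    unfolding seq_comp_def Titer_post[OF G k(1,2)] using k K by (simp add: act_def seq_post_def)
qed

lemma seq_comp_add:
  assumes G: "pre_D_seq C X Y G" and K: "pre_D_seq C Y E K" and K': "pre_D_seq C Y E K'"
  shows "seq_comp C X G (seq_add C K K') = seq_add C (seq_comp C X G K) (seq_comp C X G K')"
proof
  fix m
  have "pre_D_seq C (Pnob C m X) (Pnob C m Y) (Titer C m X G)"
    using G by (rule pre_D_seq_Titer)
  then show "seq_comp C X G (seq_add C K K') m = seq_add C (seq_comp C X G K) (seq_comp C X G K') m"
    using K K' by (simp add: seq_comp_def seq_add_def)
qed

lemma seq_comp_zero:
  assumes G: "pre_D_seq C X Y G" and E: "E \<in> Ob C"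
  shows "seq_comp C X G (seq_zero C Y E) = seq_zero C X E"
proof
  fix m
  have "pre_D_seq C (Pnob C m X) (Pnob C m Y) (Titer C m X G)"
    using G by (rule pre_D_seq_Titer)
  then show "seq_comp C X G (seq_zero C Y E) m = seq_zero C X E m"
    using E by (simp add: seq_comp_def seq_zero_def)
qed

lemma act_Dk_seq_comp:
  assumes G: "pre_D_seq C X Y G" and K: "pre_D_seq C Y E K" and H: "pre_D_seq C X' Y' H"
    and h: "arr h" "dm h = X'" "cd h = Pnob C k X"
    and h': "arr h'" "dm h' = Y'" "cd h' = Pnob C k Y"
    and act_Titer: "act C X' h (Titer C k X G) = seq_post H h'"
  shows "act C X' h (Dk k (seq_comp C X G K)) = seq_comp C X' H (act C Y' h' (Dk k K))"
proof -
  have TG: "pre_D_seq C (Pnob C k X) (Pnob C k Y) (Titer C k X G)"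
    using G by (rule pre_D_seq_Titer)
  have DK: "pre_D_seq C (Pnob C k Y) E (Dk k K)"
    using K by (rule pre_D_seq_Dk)
  have "act C X' h (Dk k (seq_comp C X G K)) = seq_comp C X' (act C X' h (Titer C k X G)) (Dk k K)"
    unfolding Dk_seq_comp using seq_comp_act[OF TG DK h] by simp
  also have "\<dots> = seq_comp C X' H (act C Y' h' (Dk k K))"
    unfolding act_Titer using seq_comp_post[OF H DK h'] .
  finally show ?thesis .
qed

section \<open>The D-sequence axioms\<close>

definition inj0 :: "'o \<Rightarrow> 'm" where
  "inj0 X = pair C (ide C X) (zro C X X)"

definition inj1 :: "'o \<Rightarrow> 'm" where
  "inj1 X = pair C (zro C X X) (ide C X)"

definition ell :: "'o \<Rightarrow> 'm" where
  "ell X = pair C (cmp C (pr0 C X X) (inj0 X)) (cmp C (pr1 C X X) (inj1 X))"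

definition interchange :: "'o \<Rightarrow> 'm" where
  "interchange X =
    pair C (pair C (cmp C (pr0 C (prd C X X) (prd C X X)) (pr0 C X X)) (cmp C (pr1 C (prd C X X) (prd C X X)) (pr0 C X X)))
           (pair C (cmp C (pr0 C (prd C X X) (prd C X X)) (pr1 C X X)) (cmp C (pr1 C (prd C X X) (prd C X X)) (pr1 C X X)))"

lemma arr_inj0 [simp]: "X \<in> Ob C \<Longrightarrow> arr (inj0 X)"
  and dm_inj0 [simp]: "X \<in> Ob C \<Longrightarrow> dm (inj0 X) = X"
  and cd_inj0 [simp]: "X \<in> Ob C \<Longrightarrow> cd (inj0 X) = prd C X X"
  and arr_inj1 [simp]: "X \<in> Ob C \<Longrightarrow> arr (inj1 X)"
  and dm_inj1 [simp]: "X \<in> Ob C \<Longrightarrow> dm (inj1 X) = X"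
  and cd_inj1 [simp]: "X \<in> Ob C \<Longrightarrow> cd (inj1 X) = prd C X X"
  by (simp_all add: inj0_def inj1_def)

lemma arr_ell [simp]: "X \<in> Ob C \<Longrightarrow> arr (ell X)"
  and dm_ell [simp]: "X \<in> Ob C \<Longrightarrow> dm (ell X) = prd C X X"
  and cd_ell [simp]: "X \<in> Ob C \<Longrightarrow> cd (ell X) = prd C (prd C X X) (prd C X X)"
  by (simp_all add: ell_def)

lemma arr_interchange [simp]: "X \<in> Ob C \<Longrightarrow> arr (interchange X)"
  and dm_interchange [simp]: "X \<in> Ob C \<Longrightarrow> dm (interchange X) = prd C (prd C X X) (prd C X X)"
  and cd_interchange [simp]: "X \<in> Ob C \<Longrightarrow> cd (interchange X) = prd C (prd C X X) (prd C X X)"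
  by (simp_all add: interchange_def)

lemma arr_id_times [simp]: "X \<in> Ob C \<Longrightarrow> arr \<phi> \<Longrightarrow> Y = dm \<phi> \<Longrightarrow> arr (id_times C X Y \<phi>)"
  and dm_id_times [simp]: "X \<in> Ob C \<Longrightarrow> arr \<phi> \<Longrightarrow> Y = dm \<phi> \<Longrightarrow> dm (id_times C X Y \<phi>) = prd C X Y"
  and cd_id_times [simp]: "X \<in> Ob C \<Longrightarrow> arr \<phi> \<Longrightarrow> Y = dm \<phi> \<Longrightarrow> cd (id_times C X Y \<phi>) = prd C X (cd \<phi>)"
  by (simp_all add: id_times_def)

definition D_zero :: "'o \<Rightarrow> 'o \<Rightarrow> (nat \<Rightarrow> 'm) \<Rightarrow> bool" where
  "D_zero X B F \<longleftrightarrow> act C X (inj0 X) (Dk 1 F) = seq_zero C X B"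

definition D_additive :: "'o \<Rightarrow> (nat \<Rightarrow> 'm) \<Rightarrow> bool" where
  "D_additive X F \<longleftrightarrow>
    act C (prd C X (prd C X X)) (id_times C X (prd C X X) (pls C (pr0 C X X) (pr1 C X X))) (Dk 1 F)
    = seq_add C (act C (prd C X (prd C X X)) (id_times C X (prd C X X) (pr0 C X X)) (Dk 1 F))
                (act C (prd C X (prd C X X)) (id_times C X (prd C X X) (pr1 C X X)) (Dk 1 F))"

definition D_linear :: "'o \<Rightarrow> (nat \<Rightarrow> 'm) \<Rightarrow> bool" where
  "D_linear X F \<longleftrightarrow> act C (prd C X X) (ell X) (Dk 2 F) = Dk 1 F"

definition D_symmetric :: "'o \<Rightarrow> (nat \<Rightarrow> 'm) \<Rightarrow> bool" where
  "D_symmetric X F \<longleftrightarrow> act C (prd C (prd C X X) (prd C X X)) (interchange X) (Dk 2 F) = Dk 2 F"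

definition D_axioms :: "'o \<Rightarrow> 'o \<Rightarrow> (nat \<Rightarrow> 'm) \<Rightarrow> bool" where
  "D_axioms X B F \<longleftrightarrow> D_zero X B F \<and> D_additive X F \<and> D_linear X F \<and> D_symmetric X F"

lemma D_seq_iff: "D_seq C A B f \<longleftrightarrow> pre_D_seq C A B f \<and> (\<forall>n. D_axioms (Pnob C n A) B (Dk n f))"
  unfolding D_seq_def D_axioms_def D_zero_def D_additive_def D_linear_def D_symmetric_def
    Let_def Dk_Dk inj0_def inj1_def ell_def interchange_def
  by simp

section \<open>Composition preserves the axioms\<close>

lemma act_inj0_Tseq:
  assumes G: "pre_D_seq C X Y G" and "D_zero X Y G"
  shows "act C X (inj0 X) (Tseq C X G) = seq_post G (inj0 Y)"
proof -
  have X: "X \<in> Ob C" and Y: "Y \<in> Ob C"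
    using G pre_D_seq_ob_src pre_D_seq_ob_tgt by blast+
  have G0: "pre_D_seq C (prd C X X) Y (act C (prd C X X) (pr0 C X X) G)"
    using G X by (simp add: pre_D_seq_act)
  have G1: "pre_D_seq C (prd C X X) Y (Dk 1 G)"
    using pre_D_seq_Dk[OF G, of 1] by simp
  have "act C X (inj0 X) (Tseq C X G)
      = seq_pair (act C X (inj0 X) (act C (prd C X X) (pr0 C X X) G)) (act C X (inj0 X) (Dk 1 G))"
    unfolding Tseq_eq_seq_pair by (rule act_seq_pair[OF G0 G1]) (simp_all add: X)
  also have "\<dots> = seq_pair (act C X (cmp C (inj0 X) (pr0 C X X)) G) (seq_zero C X Y)"
    using \<open>D_zero X Y G\<close> X by (simp add: act_act[OF G] D_zero_def)
  also have "\<dots> = seq_pair G (seq_zero C X Y)"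
    using act_ide[OF G] X by (simp add: inj0_def)
  also have "\<dots> = seq_post G (inj0 Y)"
    using G X Y by (intro ext) (simp add: seq_pair_def seq_post_def seq_zero_def inj0_def)
  finally show ?thesis .
qed

lemma D_zero_seq_comp:
  assumes G: "pre_D_seq C X Y G" and K: "pre_D_seq C Y E K"
    and "D_zero X Y G" and "D_zero Y E K"
  shows "D_zero X E (seq_comp C X G K)"
proof -
  have X: "X \<in> Ob C" and Y: "Y \<in> Ob C" and E: "E \<in> Ob C"
    using G K pre_D_seq_ob_src pre_D_seq_ob_tgt by blast+
  have "act C X (inj0 X) (Dk 1 (seq_comp C X G K)) = seq_comp C X G (act C Y (inj0 Y) (Dk 1 K))"
    by (rule act_Dk_seq_comp[OF G K G]) (use X Y act_inj0_Tseq[OF G \<open>D_zero X Y G\<close>] in simp_all)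
  also have "\<dots> = seq_zero C X E"
    using \<open>D_zero Y E K\<close> seq_comp_zero[OF G E] by (simp add: D_zero_def)
  finally show ?thesis
    unfolding D_zero_def .
qed

lemma act_id_times_Tseq:
  assumes G: "pre_D_seq C X Y G" and \<phi>: "arr \<phi>" "dm \<phi> = prd C X X" "cd \<phi> = X"
  shows "act C (prd C X (prd C X X)) (id_times C X (prd C X X) \<phi>) (Tseq C X G)
       = seq_pair (act C (prd C X (prd C X X)) (pr0 C X (prd C X X)) G)
                  (act C (prd C X (prd C X X)) (id_times C X (prd C X X) \<phi>) (Dk 1 G))"
proof -
  have X: "X \<in> Ob C"
    using G by (rule pre_D_seq_ob_src)
  have G0: "pre_D_seq C (prd C X X) Y (act C (prd C X X) (pr0 C X X) G)"
    using G X by (simp add: pre_D_seq_act)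
  have G1: "pre_D_seq C (prd C X X) Y (Dk 1 G)"
    using pre_D_seq_Dk[OF G, of 1] by simp
  have "act C (prd C X (prd C X X)) (id_times C X (prd C X X) \<phi>) (Tseq C X G)
      = seq_pair (act C (prd C X (prd C X X)) (id_times C X (prd C X X) \<phi>) (act C (prd C X X) (pr0 C X X) G))
                 (act C (prd C X (prd C X X)) (id_times C X (prd C X X) \<phi>) (Dk 1 G))"
    unfolding Tseq_eq_seq_pair by (rule act_seq_pair[OF G0 G1]) (simp_all add: X \<phi>)
  also have "act C (prd C X (prd C X X)) (id_times C X (prd C X X) \<phi>) (act C (prd C X X) (pr0 C X X) G)
      = act C (prd C X (prd C X X)) (cmp C (id_times C X (prd C X X) \<phi>) (pr0 C X X)) G"
    by (rule act_act[OF G]) (simp_all add: X \<phi>)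
  also have "cmp C (id_times C X (prd C X X) \<phi>) (pr0 C X X) = pr0 C X (prd C X X)"
    using X \<phi> by (simp add: id_times_def)
  finally show ?thesis .
qed

lemma D_additive_seq_comp:
  assumes G: "pre_D_seq C X Y G" and K: "pre_D_seq C Y E K"
    and "D_additive X G" and "D_additive Y K"
  shows "D_additive X (seq_comp C X G K)"
proof -
  have X: "X \<in> Ob C" and Y: "Y \<in> Ob C"
    using G K pre_D_seq_ob_src pre_D_seq_ob_tgt by blast+
  let ?X3 = "prd C X (prd C X X)" and ?Y3 = "prd C Y (prd C Y Y)"
  let ?onX = "id_times C X (prd C X X)" and ?onY = "id_times C Y (prd C Y Y)"
  let ?sX = "pls C (pr0 C X X) (pr1 C X X)" and ?sY = "pls C (pr0 C Y Y) (pr1 C Y Y)"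
  let ?u = "act C ?X3 (pr0 C X (prd C X X)) G"
    and ?a = "act C ?X3 (?onX (pr0 C X X)) (Dk 1 G)" and ?b = "act C ?X3 (?onX (pr1 C X X)) (Dk 1 G)"
  let ?V = "seq_pair ?u (seq_pair ?a ?b)"
  have G1: "pre_D_seq C (prd C X X) Y (Dk 1 G)" and K1: "pre_D_seq C (prd C Y Y) E (Dk 1 K)"
    using pre_D_seq_Dk[OF G, of 1] pre_D_seq_Dk[OF K, of 1] by simp_all
  have u: "pre_D_seq C ?X3 Y ?u" and a: "pre_D_seq C ?X3 Y ?a" and b: "pre_D_seq C ?X3 Y ?b"
    by (rule pre_D_seq_act[OF G] pre_D_seq_act[OF G1]; simp add: X)+
  have V: "pre_D_seq C ?X3 ?Y3 ?V"
    using u a b by (simp add: pre_D_seq_pair)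
  have slide: "act C ?X3 (?onX \<phi>) (Dk 1 (seq_comp C X G K)) = seq_comp C ?X3 ?V (act C ?Y3 (?onY \<psi>) (Dk 1 K))"
    if "arr \<phi>" "dm \<phi> = prd C X X" "cd \<phi> = X" and "arr \<psi>" "dm \<psi> = prd C Y Y" "cd \<psi> = Y"
      and "act C ?X3 (?onX \<phi>) (Tseq C X G) = seq_pair ?u (seq_post (seq_pair ?a ?b) \<psi>)" for \<phi> \<psi>
    using that X Y seq_post_pair_id_times[OF u pre_D_seq_pair[OF a b]]
    by (intro act_Dk_seq_comp[OF G K V]) simp_all
  have slide0: "act C ?X3 (?onX (pr0 C X X)) (Dk 1 (seq_comp C X G K))
      = seq_comp C ?X3 ?V (act C ?Y3 (?onY (pr0 C Y Y)) (Dk 1 K))"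
    using act_id_times_Tseq[OF G, of "pr0 C X X"] a b X Y by (intro slide) (simp_all add: seq_post_pair_pr0)
  have slide1: "act C ?X3 (?onX (pr1 C X X)) (Dk 1 (seq_comp C X G K))
      = seq_comp C ?X3 ?V (act C ?Y3 (?onY (pr1 C Y Y)) (Dk 1 K))"
    using act_id_times_Tseq[OF G, of "pr1 C X X"] a b X Y by (intro slide) (simp_all add: seq_post_pair_pr1)
  have "act C ?X3 (?onX ?sX) (Dk 1 (seq_comp C X G K)) = seq_comp C ?X3 ?V (act C ?Y3 (?onY ?sY) (Dk 1 K))"
    using act_id_times_Tseq[OF G, of ?sX] \<open>D_additive X G\<close> a b X Y
    by (intro slide) (simp_all add: D_additive_def seq_post_pair_pls)
  also have "\<dots> = seq_comp C ?X3 ?V (seq_add C (act C ?Y3 (?onY (pr0 C Y Y)) (Dk 1 K))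
                                               (act C ?Y3 (?onY (pr1 C Y Y)) (Dk 1 K)))"
    using \<open>D_additive Y K\<close> by (simp add: D_additive_def)
  also have "\<dots> = seq_add C (act C ?X3 (?onX (pr0 C X X)) (Dk 1 (seq_comp C X G K)))
                            (act C ?X3 (?onX (pr1 C X X)) (Dk 1 (seq_comp C X G K)))"
    unfolding slide0 slide1 by (rule seq_comp_add[OF V]; rule pre_D_seq_act[OF K1]) (simp_all add: Y)
  finally show ?thesis
    unfolding D_additive_def .
qed

lemma act_ell_Tseq_Tseq:
  assumes G: "pre_D_seq C X Y G" and "D_zero X Y G" and "D_linear X G"
  shows "act C (prd C X X) (ell X) (Tseq C (prd C X X) (Tseq C X G)) = seq_post (Tseq C X G) (ell Y)"
proof -
  have X: "X \<in> Ob C" and Y: "Y \<in> Ob C"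
    using G pre_D_seq_ob_src pre_D_seq_ob_tgt by blast+
  let ?X2 = "prd C X X" and ?X4 = "prd C (prd C X X) (prd C X X)"
  let ?G0 = "act C ?X2 (pr0 C X X) G" and ?H = "Tseq C X G" and ?PG1 = "act C ?X4 (Pmap C ?X2 (pr0 C X X)) (Dk 1 G)"
  have G1: "pre_D_seq C ?X2 Y (Dk 1 G)" and G2: "pre_D_seq C ?X4 Y (Dk 2 G)"
    using pre_D_seq_Dk[OF G, of 1] pre_D_seq_Dk[OF G, of 2] by (simp_all add: numeral_2_eq_2)
  have H: "pre_D_seq C ?X2 (prd C Y Y) ?H"
    using G by (rule pre_D_seq_Tseq)
  have G0: "pre_D_seq C ?X2 Y ?G0" and PG1: "pre_D_seq C ?X4 Y ?PG1"
    by (rule pre_D_seq_act[OF G] pre_D_seq_act[OF G1]; simp add: X)+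
  have H0: "pre_D_seq C ?X4 (prd C Y Y) (act C ?X4 (pr0 C ?X2 ?X2) ?H)" and H1: "pre_D_seq C ?X4 (prd C Y Y) (Dk 1 ?H)"
    using pre_D_seq_act[OF H] pre_D_seq_Dk[OF H, of 1] X by simp_all
  have "act C ?X2 (ell X) (act C ?X4 (pr0 C ?X2 ?X2) ?H) = act C ?X2 (pr0 C X X) (act C X (inj0 X) ?H)"
    using X by (intro act_act_commute[OF H]) (simp_all add: ell_def inj0_def inj1_def)
  also have "\<dots> = seq_post ?G0 (inj0 Y)"
    using X Y by (simp add: act_inj0_Tseq[OF G \<open>D_zero X Y G\<close>] act_seq_post[OF G])
  finally have first: "act C ?X2 (ell X) (act C ?X4 (pr0 C ?X2 ?X2) ?H) = seq_post ?G0 (inj0 Y)" .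
  have "act C ?X2 (ell X) ?PG1 = act C ?X2 (pr0 C X X) (act C X (inj0 X) (Dk 1 G))"
    using X by (intro act_act_commute[OF G1]) (simp_all add: ell_def inj0_def inj1_def Pmap_def)
  also have "\<dots> = seq_zero C ?X2 Y"
    using \<open>D_zero X Y G\<close> X Y by (simp add: D_zero_def act_seq_zero)
  finally have second: "act C ?X2 (ell X) ?PG1 = seq_zero C ?X2 Y" .
  have "act C ?X2 (ell X) (Tseq C ?X2 ?H)
      = seq_pair (act C ?X2 (ell X) (act C ?X4 (pr0 C ?X2 ?X2) ?H)) (act C ?X2 (ell X) (Dk 1 ?H))"
    unfolding Tseq_eq_seq_pair[of ?X2 ?H] by (rule act_seq_pair[OF H0 H1]) (simp_all add: X)
  also have "act C ?X2 (ell X) (Dk 1 ?H) = seq_pair (act C ?X2 (ell X) ?PG1) (act C ?X2 (ell X) (Dk 2 G))"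
    unfolding Tseq_eq_seq_pair[of X G] Dk_pair_act_Dk by (rule act_seq_pair[OF PG1 G2]) (simp_all add: X)
  also have "\<dots> = seq_pair (seq_zero C ?X2 Y) (Dk 1 G)"
    using second \<open>D_linear X G\<close> by (simp add: D_linear_def)
  also note first
  also have "seq_pair (seq_post ?G0 (inj0 Y)) (seq_pair (seq_zero C ?X2 Y) (Dk 1 G)) = seq_post ?H (ell Y)"
    unfolding Tseq_eq_seq_pair[of X G] using G0 G X Y
    by (intro ext) (simp add: seq_pair_def seq_post_def seq_zero_def ell_def inj0_def inj1_def Dk_def
        pre_D_seq_arr[OF G0] pre_D_seq_dm[OF G0] pre_D_seq_cd[OF G0]
        pre_D_seq_arr[OF G] pre_D_seq_dm[OF G] pre_D_seq_cd[OF G])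
  finally show ?thesis .
qed

lemma D_linear_seq_comp:
  assumes G: "pre_D_seq C X Y G" and K: "pre_D_seq C Y E K"
    and "D_zero X Y G" and "D_linear X G" and "D_linear Y K"
  shows "D_linear X (seq_comp C X G K)"
proof -
  have X: "X \<in> Ob C" and Y: "Y \<in> Ob C"
    using G K pre_D_seq_ob_src pre_D_seq_ob_tgt by blast+
  have "act C (prd C X X) (ell X) (Dk 2 (seq_comp C X G K))
      = seq_comp C (prd C X X) (Tseq C X G) (act C (prd C Y Y) (ell Y) (Dk 2 K))"
    by (rule act_Dk_seq_comp[OF G K pre_D_seq_Tseq[OF G]])
       (use X Y act_ell_Tseq_Tseq[OF G \<open>D_zero X Y G\<close> \<open>D_linear X G\<close>] in \<open>simp_all add: numeral_2_eq_2\<close>)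
  also have "\<dots> = Dk 1 (seq_comp C X G K)"
    using \<open>D_linear Y K\<close> by (simp add: D_linear_def Dk_seq_comp)
  finally show ?thesis
    unfolding D_linear_def .
qed

lemma act_interchange_Tseq_Tseq:
  assumes G: "pre_D_seq C X Y G" and "D_symmetric X G"
  shows "act C (prd C (prd C X X) (prd C X X)) (interchange X) (Tseq C (prd C X X) (Tseq C X G))
       = seq_post (Tseq C (prd C X X) (Tseq C X G)) (interchange Y)"
proof -
  have X: "X \<in> Ob C" and Y: "Y \<in> Ob C"
    using G pre_D_seq_ob_src pre_D_seq_ob_tgt by blast+
  define X2 where "X2 = prd C X X"
  define X4 where "X4 = prd C X2 X2"
  let ?c = "interchange X"
  have G1: "pre_D_seq C X2 Y (Dk 1 G)" and G2: "pre_D_seq C X4 Y (Dk 2 G)"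
    using pre_D_seq_Dk[OF G, of 1] pre_D_seq_Dk[OF G, of 2]
    by (simp_all add: X2_def X4_def numeral_2_eq_2)
  define A where "A = act C X4 (cmp C (pr0 C X2 X2) (pr0 C X X)) G"
  define B where "B = act C X4 (pr0 C X2 X2) (Dk 1 G)"
  define D where "D = act C X4 (Pmap C X2 (pr0 C X X)) (Dk 1 G)"
  have A: "pre_D_seq C X4 Y A"
    unfolding A_def by (rule pre_D_seq_act[OF G]) (simp_all add: X X2_def X4_def)
  have B: "pre_D_seq C X4 Y B" and D: "pre_D_seq C X4 Y D"
    unfolding B_def D_def by (rule pre_D_seq_act[OF G1]; simp add: X X2_def X4_def)+
  have TT: "Tseq C X2 (Tseq C X G) = seq_pair (seq_pair A B) (seq_pair D (Dk 2 G))"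
    unfolding A_def B_def D_def X4_def X2_def by (rule Tseq_Tseq_eq[OF G])
  have "act C X4 ?c A = A"
    unfolding A_def by (subst act_act[OF G]) (simp_all add: X X2_def X4_def interchange_def)
  moreover have "act C X4 ?c B = D"
    unfolding B_def D_def by (subst act_act[OF G1]) (simp_all add: X X2_def X4_def interchange_def Pmap_def)
  moreover have "act C X4 ?c D = B"
    unfolding B_def D_def by (subst act_act[OF G1]) (simp_all add: X X2_def X4_def interchange_def Pmap_def)
  moreover have "act C X4 ?c (Dk 2 G) = Dk 2 G"
    using \<open>D_symmetric X G\<close> by (simp add: D_symmetric_def X2_def X4_def)
  ultimately have "act C X4 ?c (Tseq C X2 (Tseq C X G)) = seq_pair (seq_pair A D) (seq_pair B (Dk 2 G))"
    unfolding TT using X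
    by (simp add: act_seq_pair[OF pre_D_seq_pair[OF A B] pre_D_seq_pair[OF D G2]]
        act_seq_pair[OF A B] act_seq_pair[OF D G2] X2_def X4_def)
  also have "\<dots> = seq_post (seq_pair (seq_pair A B) (seq_pair D (Dk 2 G))) (interchange Y)"
    using A B D G2 Y by (intro ext) (simp add: seq_pair_def seq_post_def interchange_def)
  finally show ?thesis
    unfolding TT[symmetric] X4_def X2_def .
qed

lemma D_symmetric_seq_comp:
  assumes G: "pre_D_seq C X Y G" and K: "pre_D_seq C Y E K"
    and "D_symmetric X G" and "D_symmetric Y K"
  shows "D_symmetric X (seq_comp C X G K)"
proof -
  have X: "X \<in> Ob C" and Y: "Y \<in> Ob C"
    using G K pre_D_seq_ob_src pre_D_seq_ob_tgt by blast+
  have "act C (prd C (prd C X X) (prd C X X)) (interchange X) (Dk 2 (seq_comp C X G K))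
      = seq_comp C (prd C (prd C X X) (prd C X X)) (Tseq C (prd C X X) (Tseq C X G))
          (act C (prd C (prd C Y Y) (prd C Y Y)) (interchange Y) (Dk 2 K))"
    by (rule act_Dk_seq_comp[OF G K pre_D_seq_Tseq[OF pre_D_seq_Tseq[OF G]]])
       (use X Y act_interchange_Tseq_Tseq[OF G \<open>D_symmetric X G\<close>] in \<open>simp_all add: numeral_2_eq_2\<close>)
  also have "\<dots> = Dk 2 (seq_comp C X G K)"
    using \<open>D_symmetric Y K\<close> by (simp add: D_symmetric_def Dk_seq_comp numeral_2_eq_2)
  finally show ?thesis
    unfolding D_symmetric_def .
qed

lemma D_axioms_seq_comp:
  "pre_D_seq C X Y G \<Longrightarrow> pre_D_seq C Y E K \<Longrightarrow> D_axioms X Y G \<Longrightarrow> D_axioms Y E K \<Longrightarrow>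
   D_axioms X E (seq_comp C X G K)"
  unfolding D_axioms_def
  using D_zero_seq_comp D_additive_seq_comp D_linear_seq_comp D_symmetric_seq_comp by blast

section \<open>Additive maps\<close>

definition additive :: "'m \<Rightarrow> bool" where
  "additive q \<longleftrightarrow> arr q \<and> (\<forall>Z \<in> Ob C. cmp C (zro C Z (dm q)) q = zro C Z (cd q)) \<and>
    (\<forall>a b. arr a \<longrightarrow> arr b \<longrightarrow> dm a = dm b \<longrightarrow> cd a = dm q \<longrightarrow> cd b = dm q \<longrightarrow>
       cmp C (pls C a b) q = pls C (cmp C a q) (cmp C b q))"

lemma additive_arr: "additive q \<Longrightarrow> arr q"
  and additive_zro: "additive q \<Longrightarrow> Z \<in> Ob C \<Longrightarrow> A = dm q \<Longrightarrow> cmp C (zro C Z A) q = zro C Z (cd q)"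
  and additive_pls: "additive q \<Longrightarrow> arr a \<Longrightarrow> arr b \<Longrightarrow> dm a = dm b \<Longrightarrow> cd a = dm q \<Longrightarrow> cd b = dm q \<Longrightarrow>
    cmp C (pls C a b) q = pls C (cmp C a q) (cmp C b q)"
  unfolding additive_def by blast+

lemma additiveI:
  assumes "arr q" "\<And>Z. Z \<in> Ob C \<Longrightarrow> cmp C (zro C Z (dm q)) q = zro C Z (cd q)"
    and "\<And>a b. arr a \<Longrightarrow> arr b \<Longrightarrow> dm a = dm b \<Longrightarrow> cd a = dm q \<Longrightarrow> cd b = dm q \<Longrightarrow>
      cmp C (pls C a b) q = pls C (cmp C a q) (cmp C b q)"
  shows "additive q"
  unfolding additive_def using assms by blast

lemma additive_pr0: "A \<in> Ob C \<Longrightarrow> B \<in> Ob C \<Longrightarrow> additive (pr0 C A B)"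
  and additive_pr1: "A \<in> Ob C \<Longrightarrow> B \<in> Ob C \<Longrightarrow> additive (pr1 C A B)"
  by (auto intro: additiveI)

lemma additive_cmp:
  assumes p: "additive p" and q: "additive q" and "cd p = dm q"
  shows "additive (cmp C p q)"
proof (rule additiveI)
  note pq = additive_arr[OF p] additive_arr[OF q] \<open>cd p = dm q\<close>
  show "arr (cmp C p q)"
    using pq by simp
  show "cmp C (zro C Z (dm (cmp C p q))) (cmp C p q) = zro C Z (cd (cmp C p q))" if "Z \<in> Ob C" for Z
    using pq that by (simp add: additive_zro[OF p] additive_zro[OF q] flip: cmp_assoc_arr)
  show "cmp C (pls C a b) (cmp C p q) = pls C (cmp C a (cmp C p q)) (cmp C b (cmp C p q))"
    if "arr a" "arr b" "dm a = dm b" "cd a = dm (cmp C p q)" "cd b = dm (cmp C p q)" for a b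
    using pq that by (simp add: additive_pls[OF p] additive_pls[OF q] flip: cmp_assoc_arr)
qed

lemma additive_pair:
  assumes a: "additive a" and b: "additive b" and "dm a = dm b"
  shows "additive (pair C a b)"
proof (rule additiveI)
  note ab = additive_arr[OF a] additive_arr[OF b] \<open>dm a = dm b\<close>
  show "arr (pair C a b)"
    using ab by simp
  show "cmp C (zro C Z (dm (pair C a b))) (pair C a b) = zro C Z (cd (pair C a b))" if "Z \<in> Ob C" for Z
    using ab that by (simp add: additive_zro[OF a] additive_zro[OF b])
  show "cmp C (pls C x y) (pair C a b) = pls C (cmp C x (pair C a b)) (cmp C y (pair C a b))"
    if "arr x" "arr y" "dm x = dm y" "cd x = dm (pair C a b)" "cd y = dm (pair C a b)" for x y
    using ab that by (simp add: additive_pls[OF a] additive_pls[OF b])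
qed

lemma additive_Pnmap: "additive q \<Longrightarrow> additive (Pnmap C n (dm q) q)"
proof (induction n)
  case (Suc n)
  then have "arr (Pnmap C n (dm q) q)"
    by (simp add: additive_arr)
  with Suc show ?case
    unfolding Pnmap.simps Pmap_def
    by (auto intro!: additive_pair additive_cmp additive_pr0 additive_pr1 simp: additive_arr)
qed simp

section \<open>The tangent sequence T f\<close>

lemma act_Dk_pair_act_Dk:
  assumes F: "pre_D_seq C X B F" and q: "arr q" "dm q = prd C X X" "cd q = X"
    and h': "arr h'" "dm h' = Z" "cd h' = prd C (prd C X X) (prd C X X)"
    and h: "arr h" "dm h = W" "cd h = prd C X X" and p': "arr p'" "dm p' = Z" "cd p' = W"
    and "cmp C h' (Pmap C (prd C X X) q) = cmp C p' h"
  shows "act C Z h' (Dk 1 (seq_pair (act C (prd C X X) q F) (Dk 1 F)))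
       = seq_pair (act C Z p' (act C W h (Dk 1 F))) (act C Z h' (Dk 2 F))"
proof -
  have X: "X \<in> Ob C"
    using F by (rule pre_D_seq_ob_src)
  let ?X2 = "prd C (prd C X X) (prd C X X)" and ?Pq = "Pmap C (prd C X X) q"
  have F1: "pre_D_seq C (prd C X X) B (Dk 1 F)" and F2: "pre_D_seq C ?X2 B (Dk 2 F)"
    using pre_D_seq_Dk[OF F, of 1] pre_D_seq_Dk[OF F, of 2] by (simp_all add: numeral_2_eq_2)
  have PqF1: "pre_D_seq C ?X2 B (act C ?X2 ?Pq (Dk 1 F))"
    by (rule pre_D_seq_act[OF F1]) (simp_all add: q)
  have "act C Z h' (Dk 1 (seq_pair (act C (prd C X X) q F) (Dk 1 F)))
      = seq_pair (act C Z h' (act C ?X2 ?Pq (Dk 1 F))) (act C Z h' (Dk 2 F))"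
    unfolding Dk_pair_act_Dk by (rule act_seq_pair[OF PqF1 F2]) (simp_all add: h')
  also have "act C Z h' (act C ?X2 ?Pq (Dk 1 F)) = act C Z p' (act C W h (Dk 1 F))"
    using assms X by (intro act_act_commute[OF F1]) simp_all
  finally show ?thesis .
qed

lemma D_zero_pair_act_Dk:
  assumes F: "pre_D_seq C X B F" and q: "additive q" "dm q = prd C X X" "cd q = X"
    and "D_zero X B F" and "D_zero (prd C X X) B (Dk 1 F)"
  shows "D_zero (prd C X X) (prd C B B) (seq_pair (act C (prd C X X) q F) (Dk 1 F))"
proof -
  have X: "X \<in> Ob C" and B: "B \<in> Ob C"
    using F pre_D_seq_ob_src pre_D_seq_ob_tgt by blast+
  have q': "arr q"
    using q(1) by (rule additive_arr)
  have "cmp C (inj0 (prd C X X)) (Pmap C (prd C X X) q) = cmp C q (inj0 X)"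
    using q q' X by (simp add: inj0_def Pmap_def additive_zro[OF q(1)])
  then have "act C (prd C X X) (inj0 (prd C X X)) (Dk 1 (seq_pair (act C (prd C X X) q F) (Dk 1 F)))
      = seq_pair (act C (prd C X X) q (act C X (inj0 X) (Dk 1 F))) (act C (prd C X X) (inj0 (prd C X X)) (Dk 2 F))"
    using q q' X by (intro act_Dk_pair_act_Dk[OF F]) simp_all
  also have "\<dots> = seq_zero C (prd C X X) (prd C B B)"
    using \<open>D_zero X B F\<close> \<open>D_zero (prd C X X) B (Dk 1 F)\<close> q q' X B
    by (simp add: D_zero_def act_seq_zero Dk_Dk numeral_2_eq_2 seq_pair_zero)
  finally show ?thesis
    unfolding D_zero_def .
qed

lemma D_linear_pair_act_Dk:
  assumes F: "pre_D_seq C X B F" and q: "additive q" "dm q = prd C X X" "cd q = X"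
    and "D_linear X F" and "D_linear (prd C X X) (Dk 1 F)"
  shows "D_linear (prd C X X) (seq_pair (act C (prd C X X) q F) (Dk 1 F))"
proof -
  have X: "X \<in> Ob C"
    using F by (rule pre_D_seq_ob_src)
  let ?X' = "prd C X X" and ?Pq = "Pmap C (prd C X X) q"
  let ?X2 = "prd C ?X' ?X'" and ?PPq = "Pmap C (prd C ?X' ?X') ?Pq"
  have q': "arr q"
    using q(1) by (rule additive_arr)
  have F2: "pre_D_seq C ?X2 B (Dk 2 F)" and F3: "pre_D_seq C (prd C ?X2 ?X2) B (Dk 3 F)"
    using pre_D_seq_Dk[OF F, of 2] pre_D_seq_Dk[OF F, of 3] by (simp_all add: numeral_2_eq_2 numeral_3_eq_3)
  have PPqF2: "pre_D_seq C (prd C ?X2 ?X2) B (act C (prd C ?X2 ?X2) ?PPq (Dk 2 F))"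
    by (rule pre_D_seq_act[OF F2]) (simp_all add: q q')
  have "cmp C (ell ?X') ?PPq = cmp C ?Pq (ell X)"
    using q q' X by (simp add: ell_def inj0_def inj1_def Pmap_def additive_zro[OF q(1)])
  then have "act C ?X2 (ell ?X') (act C (prd C ?X2 ?X2) ?PPq (Dk 2 F)) = act C ?X2 ?Pq (act C ?X' (ell X) (Dk 2 F))"
    using q q' X by (intro act_act_commute[OF F2]) simp_all
  also have "\<dots> = act C ?X2 ?Pq (Dk 1 F)"
    using \<open>D_linear X F\<close> by (simp add: D_linear_def)
  finally have first: "act C ?X2 (ell ?X') (act C (prd C ?X2 ?X2) ?PPq (Dk 2 F)) = act C ?X2 ?Pq (Dk 1 F)" .
  have "act C ?X2 (ell ?X') (Dk 2 (seq_pair (act C ?X' q F) (Dk 1 F)))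
      = seq_pair (act C ?X2 (ell ?X') (act C (prd C ?X2 ?X2) ?PPq (Dk 2 F))) (act C ?X2 (ell ?X') (Dk 3 F))"
    unfolding Dk_pair_act_Dk by (rule act_seq_pair[OF PPqF2 F3]) (simp_all add: X)
  also have "\<dots> = Dk 1 (seq_pair (act C ?X' q F) (Dk 1 F))"
    unfolding Dk_pair_act_Dk using first \<open>D_linear (prd C X X) (Dk 1 F)\<close>
    by (simp add: D_linear_def Dk_Dk numeral_2_eq_2 numeral_3_eq_3)
  finally show ?thesis
    unfolding D_linear_def .
qed

lemma D_symmetric_pair_act_Dk:
  assumes F: "pre_D_seq C X B F" and q: "arr q" "dm q = prd C X X" "cd q = X"
    and "D_symmetric X F" and "D_symmetric (prd C X X) (Dk 1 F)"
  shows "D_symmetric (prd C X X) (seq_pair (act C (prd C X X) q F) (Dk 1 F))"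
proof -
  have X: "X \<in> Ob C"
    using F by (rule pre_D_seq_ob_src)
  let ?X' = "prd C X X" and ?Pq = "Pmap C (prd C X X) q"
  let ?X2 = "prd C ?X' ?X'" and ?PPq = "Pmap C (prd C ?X' ?X') ?Pq"
  let ?X4 = "prd C ?X2 ?X2"
  have F2: "pre_D_seq C ?X2 B (Dk 2 F)" and F3: "pre_D_seq C ?X4 B (Dk 3 F)"
    using pre_D_seq_Dk[OF F, of 2] pre_D_seq_Dk[OF F, of 3] by (simp_all add: numeral_2_eq_2 numeral_3_eq_3)
  have PPqF2: "pre_D_seq C ?X4 B (act C ?X4 ?PPq (Dk 2 F))"
    by (rule pre_D_seq_act[OF F2]) (simp_all add: q)
  have "cmp C (interchange ?X') ?PPq = cmp C ?PPq (interchange X)"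
    using q X by (simp add: interchange_def Pmap_def)
  then have "act C ?X4 (interchange ?X') (act C ?X4 ?PPq (Dk 2 F)) = act C ?X4 ?PPq (act C ?X2 (interchange X) (Dk 2 F))"
    using q X by (intro act_act_commute[OF F2]) simp_all
  also have "\<dots> = act C ?X4 ?PPq (Dk 2 F)"
    using \<open>D_symmetric X F\<close> by (simp add: D_symmetric_def)
  finally have first: "act C ?X4 (interchange ?X') (act C ?X4 ?PPq (Dk 2 F)) = act C ?X4 ?PPq (Dk 2 F)" .
  have "act C ?X4 (interchange ?X') (Dk 2 (seq_pair (act C ?X' q F) (Dk 1 F)))
      = seq_pair (act C ?X4 (interchange ?X') (act C ?X4 ?PPq (Dk 2 F))) (act C ?X4 (interchange ?X') (Dk 3 F))"
    unfolding Dk_pair_act_Dk by (rule act_seq_pair[OF PPqF2 F3]) (simp_all add: X)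
  also have "\<dots> = Dk 2 (seq_pair (act C ?X' q F) (Dk 1 F))"
    unfolding Dk_pair_act_Dk using first \<open>D_symmetric (prd C X X) (Dk 1 F)\<close>
    by (simp add: D_symmetric_def Dk_Dk numeral_2_eq_2 numeral_3_eq_3)
  finally show ?thesis
    unfolding D_symmetric_def .
qed

lemma D_additive_pair_act_Dk:
  assumes F: "pre_D_seq C X B F" and q: "additive q" "dm q = prd C X X" "cd q = X"
    and "D_additive X F" and "D_additive (prd C X X) (Dk 1 F)"
  shows "D_additive (prd C X X) (seq_pair (act C (prd C X X) q F) (Dk 1 F))"
proof -
  have X: "X \<in> Ob C"
    using F by (rule pre_D_seq_ob_src)
  let ?X' = "prd C X X" and ?Pq = "Pmap C (prd C X X) q"
  let ?X2 = "prd C ?X' ?X'"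
  let ?on = "id_times C X ?X'" and ?on' = "id_times C ?X' ?X2"
  let ?r = "pair C (cmp C (pr0 C ?X' ?X2) q) (cmp C (pr1 C ?X' ?X2) ?Pq)"
  let ?S = "seq_pair (act C ?X' q F) (Dk 1 F)"
  have q': "arr q"
    using q(1) by (rule additive_arr)
  have F1: "pre_D_seq C ?X' B (Dk 1 F)" and F2: "pre_D_seq C ?X2 B (Dk 2 F)"
    using pre_D_seq_Dk[OF F, of 1] pre_D_seq_Dk[OF F, of 2] by (simp_all add: numeral_2_eq_2)
  have r: "arr ?r" "dm ?r = prd C ?X' ?X2" "cd ?r = prd C X ?X'"
    using q q' X by simp_all
  have on_F1: "pre_D_seq C (prd C X ?X') B (act C (prd C X ?X') (?on \<phi>) (Dk 1 F))"
    if "arr \<phi>" "dm \<phi> = ?X'" "cd \<phi> = X" for \<phi>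
    by (rule pre_D_seq_act[OF F1]) (simp_all add: that X)
  have on'_F2: "pre_D_seq C (prd C ?X' ?X2) B (act C (prd C ?X' ?X2) (?on' \<phi>') (Dk 2 F))"
    if "arr \<phi>'" "dm \<phi>' = ?X2" "cd \<phi>' = ?X'" for \<phi>'
    by (rule pre_D_seq_act[OF F2]) (simp_all add: that X)
  have slide: "act C (prd C ?X' ?X2) (?on' \<phi>') (Dk 1 ?S)
      = seq_pair (act C (prd C ?X' ?X2) ?r (act C (prd C X ?X') (?on \<phi>) (Dk 1 F)))
                 (act C (prd C ?X' ?X2) (?on' \<phi>') (Dk 2 F))"
    if "arr \<phi>'" "dm \<phi>' = ?X2" "cd \<phi>' = ?X'" and "arr \<phi>" "dm \<phi> = ?X'" "cd \<phi> = X"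
      and "cmp C (?on' \<phi>') ?Pq = cmp C ?r (?on \<phi>)" for \<phi>' \<phi>
    using that q q' X by (intro act_Dk_pair_act_Dk[OF F]) simp_all
  have "cmp C (?on' (pr0 C ?X' ?X')) ?Pq = cmp C ?r (?on (pr0 C X X))"
    and "cmp C (?on' (pr1 C ?X' ?X')) ?Pq = cmp C ?r (?on (pr1 C X X))"
    and "cmp C (?on' (pls C (pr0 C ?X' ?X') (pr1 C ?X' ?X'))) ?Pq
       = cmp C ?r (?on (pls C (pr0 C X X) (pr1 C X X)))"
    using q q' X by (simp_all add: id_times_def Pmap_def additive_pls[OF q(1)])
  note slide0 = slide[OF _ _ _ _ _ _ this(1)] and slide1 = slide[OF _ _ _ _ _ _ this(2)]
    and slide_pls = slide[OF _ _ _ _ _ _ this(3)]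
  let ?a0 = "act C (prd C X ?X') (?on (pr0 C X X)) (Dk 1 F)"
    and ?a1 = "act C (prd C X ?X') (?on (pr1 C X X)) (Dk 1 F)"
    and ?b0 = "act C (prd C ?X' ?X2) (?on' (pr0 C ?X' ?X')) (Dk 2 F)"
    and ?b1 = "act C (prd C ?X' ?X2) (?on' (pr1 C ?X' ?X')) (Dk 2 F)"
  have a0: "pre_D_seq C (prd C X ?X') B ?a0" and a1: "pre_D_seq C (prd C X ?X') B ?a1"
    by (rule on_F1; simp add: X)+
  have b0: "pre_D_seq C (prd C ?X' ?X2) B ?b0" and b1: "pre_D_seq C (prd C ?X' ?X2) B ?b1"
    by (rule on'_F2; simp add: X)+
  have "act C (prd C ?X' ?X2) (?on' (pls C (pr0 C ?X' ?X') (pr1 C ?X' ?X'))) (Dk 1 ?S)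
      = seq_pair (act C (prd C ?X' ?X2) ?r (seq_add C ?a0 ?a1)) (seq_add C ?b0 ?b1)"
    using slide_pls X \<open>D_additive X F\<close> \<open>D_additive (prd C X X) (Dk 1 F)\<close>
    by (simp add: D_additive_def Dk_Dk numeral_2_eq_2)
  also have "\<dots> = seq_add C (seq_pair (act C (prd C ?X' ?X2) ?r ?a0) ?b0) (seq_pair (act C (prd C ?X' ?X2) ?r ?a1) ?b1)"
    by (rule seq_pair_act_seq_add[OF a0 a1 b0 b1 r])
  also have "\<dots> = seq_add C (act C (prd C ?X' ?X2) (?on' (pr0 C ?X' ?X')) (Dk 1 ?S))
                            (act C (prd C ?X' ?X2) (?on' (pr1 C ?X' ?X')) (Dk 1 ?S))"
    using slide0 slide1 X by simp
  finally show ?thesis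
    unfolding D_additive_def .
qed

lemma D_axioms_pair_act_Dk:
  "pre_D_seq C X B F \<Longrightarrow> additive q \<Longrightarrow> dm q = prd C X X \<Longrightarrow> cd q = X \<Longrightarrow>
   D_axioms X B F \<Longrightarrow> D_axioms (prd C X X) B (Dk 1 F) \<Longrightarrow>
   D_axioms (prd C X X) (prd C B B) (seq_pair (act C (prd C X X) q F) (Dk 1 F))"
  unfolding D_axioms_def
  using D_zero_pair_act_Dk D_additive_pair_act_Dk D_linear_pair_act_Dk D_symmetric_pair_act_Dk additive_arr
  by blast

lemma D_seq_Tseq:
  assumes f: "D_seq C A B f"
  shows "D_seq C (prd C A A) (prd C B B) (Tseq C A f)"
  unfolding D_seq_iff
proof (intro conjI allI)
  have pf: "pre_D_seq C A B f" and axioms: "\<And>n. D_axioms (Pnob C n A) B (Dk n f)"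
    using f by (simp_all add: D_seq_iff)
  then have A: "A \<in> Ob C"
    by (simp add: pre_D_seq_ob_src)
  show "pre_D_seq C (prd C A A) (prd C B B) (Tseq C A f)"
    using pf by (rule pre_D_seq_Tseq)
  fix n
  let ?X = "Pnob C n A" and ?q = "Pnmap C n (prd C A A) (pr0 C A A)"
  have q: "additive ?q" "dm ?q = prd C ?X ?X" "cd ?q = ?X"
    using additive_Pnmap[OF additive_pr0[OF A A], of n] A by simp_all
  have "D_axioms (prd C ?X ?X) B (Dk 1 (Dk n f))"
    using axioms[of "Suc n"] by (simp add: Dk_Dk)
  then have "D_axioms (prd C ?X ?X) (prd C B B) (seq_pair (act C (prd C ?X ?X) ?q (Dk n f)) (Dk 1 (Dk n f)))"
    by (rule D_axioms_pair_act_Dk[OF pre_D_seq_Dk[OF pf] q axioms])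
  moreover have "Dk n (Tseq C A f) = seq_pair (act C (prd C ?X ?X) ?q (Dk n f)) (Dk 1 (Dk n f))"
    by (simp add: Tseq_eq_seq_pair Dk_seq_pair Dk_act Dk_Dk add.commute)
  ultimately show "D_axioms (Pnob C n (prd C A A)) (prd C B B) (Dk n (Tseq C A f))"
    by simp
qed

lemma D_seq_Titer: "D_seq C A B f \<Longrightarrow> D_seq C (Pnob C n A) (Pnob C n B) (Titer C n A f)"
  by (induction n) (simp_all add: D_seq_Tseq)

end

theorem lemma4p5:
  fixes C :: "('o, 'm) cla_struct"
  assumes "cartesian_left_additive C"
    and "D_seq C A B f"
    and "D_seq C B E g"
  shows "D_seq C A E (seq_comp C A f g)"
proof -
  interpret cartesian_left_additive C
    by (rule assms(1))
  have f: "pre_D_seq C A B f" and g: "pre_D_seq C B E g"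
    and g_axioms: "\<And>n. D_axioms (Pnob C n B) E (Dk n g)"
    using assms(2,3) by (simp_all add: D_seq_iff)
  have "D_axioms (Pnob C n A) E (Dk n (seq_comp C A f g))" for n
  proof -
    have "D_seq C (Pnob C n A) (Pnob C n B) (Titer C n A f)"
      using assms(2) by (rule D_seq_Titer)
    then have Tf: "pre_D_seq C (Pnob C n A) (Pnob C n B) (Titer C n A f)"
      and Tf_axioms: "D_axioms (Pnob C n A) (Pnob C n B) (Titer C n A f)"
      using D_seq_iff[of "Pnob C n A"] by (auto dest: spec[of _ 0])
    show ?thesis
      unfolding Dk_seq_comp by (rule D_axioms_seq_comp[OF Tf pre_D_seq_Dk[OF g] Tf_axioms g_axioms])
  qed
  with f g show ?thesis
    by (simp add: D_seq_iff pre_D_seq_seq_comp)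
qed

end
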